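(* Let $\Gamma$ be a finitely generated group which is quasi-isometric to the hyperbolic plane $\mathcal H=\{z\in\mathbb C:\operatorname{Im}z>0\}$ with its hyperbolic metric. Then $\Gamma$ is extraterrestrial.
   Context: $\Gamma$ carries the word metric of a finite generating set. A finitely generated group is extraterrestrial if its Cayley graph with respect to some (equivalently any) finite symmetric generating set is extraterrestrial, where a graph $G=(V,E)$ is extraterrestrial if for every $m$ there is $k$ such that for every $r$ there is a triple $(U,F,O)$ of pairwise disjoint finite vertex sets with $U\neq\emptyset$, $|U|\ge m|F|$, a bijection $\mu:U\to O$ with $d_G(u,\mu(u))\le k$, and every path from $U$ to $O$ either contains a vertex of $F$ or has length at least $r$. *)

theory Defs
  imports Complex_Main "HOL-Algebra.Generated_Groups" "HOL-Library.Extended_Nat"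
begin

definition is_path :: "'v set \<Rightarrow> ('v \<Rightarrow> 'v \<Rightarrow> bool) \<Rightarrow> 'v list \<Rightarrow> bool" where
  "is_path V E p \<longleftrightarrow> p \<noteq> [] \<and> set p \<subseteq> V \<and>
     (\<forall>i. Suc i < length p \<longrightarrow> E (p ! i) (p ! Suc i))"

definition path_length :: "'v list \<Rightarrow> nat" where
  "path_length p = length p - 1"

text \<open>Graph distance (infinite if no path exists).\<close>
definition graph_dist :: "'v set \<Rightarrow> ('v \<Rightarrow> 'v \<Rightarrow> bool) \<Rightarrow> 'v \<Rightarrow> 'v \<Rightarrow> enat" where
  "graph_dist V E u v =
     (INF p \<in> {p. is_path V E p \<and> hd p = u \<and> last p = v}. enat (path_length p))"

definition extraterrestrial_graph :: "'v set \<Rightarrow> ('v \<Rightarrow> 'v \<Rightarrow> bool) \<Rightarrow> bool" where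
  "extraterrestrial_graph V E \<longleftrightarrow>
    (\<forall>m::nat. \<exists>k::nat. \<forall>r::nat. \<exists>U F Ou (\<mu> :: 'v \<Rightarrow> 'v).
       U \<subseteq> V \<and> F \<subseteq> V \<and> Ou \<subseteq> V \<and> finite U \<and> finite F \<and> finite Ou \<and>
       U \<inter> F = {} \<and> U \<inter> Ou = {} \<and> F \<inter> Ou = {} \<and>
       U \<noteq> {} \<and> card U \<ge> m * card F \<and>
       bij_betw \<mu> U Ou \<and> (\<forall>u\<in>U. graph_dist V E u (\<mu> u) \<le> enat k) \<and>
       (\<forall>p. is_path V E p \<and> hd p \<in> U \<and> last p \<in> Ou \<longrightarrow>
              set p \<inter> F \<noteq> {} \<or> path_length p \<ge> r))"

definition finite_symm_gen_set :: "('a, 'b) monoid_scheme \<Rightarrow> 'a set \<Rightarrow> bool" where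
  "finite_symm_gen_set G S \<longleftrightarrow> finite S \<and> S \<subseteq> carrier G \<and>
     (\<forall>s\<in>S. inv\<^bsub>G\<^esub> s \<in> S) \<and> generate G S = carrier G"

definition cayley_edge :: "('a, 'b) monoid_scheme \<Rightarrow> 'a set \<Rightarrow> 'a \<Rightarrow> 'a \<Rightarrow> bool" where
  "cayley_edge G S x y \<longleftrightarrow> (\<exists>s\<in>S. y = x \<otimes>\<^bsub>G\<^esub> s)"

text \<open>Word metric: graph distance in the Cayley graph (finite since S generates).\<close>
definition word_dist :: "('a, 'b) monoid_scheme \<Rightarrow> 'a set \<Rightarrow> 'a \<Rightarrow> 'a \<Rightarrow> real" where
  "word_dist G S x y = real (the_enat (graph_dist (carrier G) (cayley_edge G S) x y))"

definition finitely_generated_group :: "('a, 'b) monoid_scheme \<Rightarrow> bool" where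
  "finitely_generated_group G \<longleftrightarrow> group G \<and> (\<exists>S. finite_symm_gen_set G S)"

definition extraterrestrial_group :: "('a, 'b) monoid_scheme \<Rightarrow> bool" where
  "extraterrestrial_group G \<longleftrightarrow>
     (\<exists>S. finite_symm_gen_set G S \<and> extraterrestrial_graph (carrier G) (cayley_edge G S))"

definition quasi_isometric ::
  "'a set \<Rightarrow> ('a \<Rightarrow> 'a \<Rightarrow> real) \<Rightarrow> 'c set \<Rightarrow> ('c \<Rightarrow> 'c \<Rightarrow> real) \<Rightarrow> bool" where
  "quasi_isometric X dX Y dY \<longleftrightarrow>
     (\<exists>f L C. f ` X \<subseteq> Y \<and> L \<ge> 1 \<and> C \<ge> 0 \<and>
        (\<forall>x\<in>X. \<forall>x'\<in>X. dX x x' / L - C \<le> dY (f x) (f x') \<and>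
                          dY (f x) (f x') \<le> L * dX x x' + C) \<and>
        (\<forall>y\<in>Y. \<exists>x\<in>X. dY (f x) y \<le> C))"

definition upper_half_plane :: "complex set" where
  "upper_half_plane = {z. Im z > 0}"

definition hyp_dist :: "complex \<Rightarrow> complex \<Rightarrow> real" where
  "hyp_dist z w = arcosh (1 + (cmod (z - w))\<^sup>2 / (2 * Im z * Im w))"

end

theory Submission
  imports Defs
begin

(* Transport everything to the upper half plane along the quasi-isometry f.  A Cayley edge
   moves f by a bounded hyperbolic distance, hence changes Im f by a bounded factor rho and
   Re f by at most rho * Im f.  For a height h, the set F of group elements mapped into the
   cone segment |Re z| <= rho Im z, 1 <= Im z <= b^(h+1) is covered by O(h) boxes of bounded
   hyperbolic diameter, so |F| = O(h).  The set U consists of elements near the grid points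
   (c t b^j, b^j) to the right of the cone, for about h/2 scales j and a fixed number T of
   columns t, and mu sends each of them to an element near the mirror point (-c t b^j, b^j);
   mirror points lie at bounded hyperbolic distance independent of the scale, which bounds k
   in terms of m only.  A path from U to mu(U) must cross the cone, and if it avoids F it
   does so below height 1 or above height b^(h+1); as Im f changes by at most a factor rho
   per step, this takes more than r steps once the lowest scale b^e exceeds rho^(r+1). *)

section \<open>The upper half plane\<close>

definition hyp_delta :: "complex \<Rightarrow> complex \<Rightarrow> real" where
  "hyp_delta z w = (cmod (z - w))\<^sup>2 / (2 * Im z * Im w)"

lemma hyp_delta_expand:
  "hyp_delta z w = ((Re z - Re w)\<^sup>2 + (Im z - Im w)\<^sup>2) / (2 * Im z * Im w)"
  unfolding hyp_delta_def by (simp add: cmod_power2)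

lemma hyp_delta_commute: "hyp_delta z w = hyp_delta w z"
  unfolding hyp_delta_def by (simp add: norm_minus_commute mult.commute mult.left_commute)

lemma hyp_delta_nonneg: "Im z > 0 \<Longrightarrow> Im w > 0 \<Longrightarrow> hyp_delta z w \<ge> 0"
  unfolding hyp_delta_def by simp

lemma hyp_dist_eq_arcosh: "hyp_dist z w = arcosh (1 + hyp_delta z w)"
  unfolding hyp_dist_def hyp_delta_def ..

lemma hyp_dist_le_iff:
  assumes "Im z > 0" "Im w > 0" "A \<ge> 0"
  shows "hyp_dist z w \<le> A \<longleftrightarrow> hyp_delta z w \<le> cosh A - 1"
proof -
  have ge1: "1 + hyp_delta z w \<ge> 1" using hyp_delta_nonneg[OF assms(1,2)] by simp
  have "hyp_dist z w \<le> A \<longleftrightarrow> cosh (arcosh (1 + hyp_delta z w)) \<le> cosh A"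
    unfolding hyp_dist_eq_arcosh
    using cosh_real_nonneg_le_iff[of "arcosh (1 + hyp_delta z w)" A] ge1 assms(3) by simp
  also have "\<dots> \<longleftrightarrow> hyp_delta z w \<le> cosh A - 1" using ge1 by (simp add: le_diff_eq add.commute)
  finally show ?thesis .
qed

lemma hyp_dist_le_arcosh:
  assumes "Im z > 0" "Im w > 0" "hyp_delta z w \<le> q"
  shows "hyp_dist z w \<le> arcosh (1 + q)"
proof -
  have "q \<ge> 0" using hyp_delta_nonneg[OF assms(1,2)] assms(3) by linarith
  then show ?thesis using hyp_dist_le_iff[OF assms(1,2), of "arcosh (1 + q)"] assms(3) by simp
qed

lemma hyp_delta_le_iff_sq_le:
  assumes "Im z > 0" "Im w > 0"
  shows "hyp_delta z w \<le> q \<longleftrightarrow> (Re z - Re w)\<^sup>2 + (Im z - Im w)\<^sup>2 \<le> q * (2 * Im z * Im w)"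
  unfolding hyp_delta_expand using assms by (simp add: pos_divide_le_eq)

lemma hyp_delta_le_imp_Im_le:
  assumes "Im z > 0" "Im w > 0" "hyp_delta z w \<le> q"
  shows "Im w \<le> (2 + 8 * q) * Im z"
proof (rule ccontr)
  assume "\<not> ?thesis"
  then have far: "2 * Im z + 8 * q * Im z < Im w" by (simp add: algebra_simps)
  have q: "q \<ge> 0" using hyp_delta_nonneg[OF assms(1,2)] assms(3) by linarith
  have "(Im w / 2)\<^sup>2 \<le> (Im z - Im w)\<^sup>2"
  proof (rule abs_le_square_iff[THEN iffD1])
    show "\<bar>Im w / 2\<bar> \<le> \<bar>Im z - Im w\<bar>"
      using far q assms(1,2) mult_nonneg_nonneg[OF q, of "Im z"] by linarith
  qed
  also have "\<dots> \<le> q * (2 * Im z * Im w)"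
    using hyp_delta_le_iff_sq_le[OF assms(1,2), of q] assms(3) zero_le_power2[of "Re z - Re w"] by linarith
  finally have "(Im w / 2)\<^sup>2 \<le> q * (2 * Im z * Im w)" .
  moreover have "Im w * Im w = 4 * (Im w / 2)\<^sup>2" by (simp add: power2_eq_square)
  moreover have "(8 * q * Im z) * Im w = 4 * (q * (2 * Im z * Im w))" by simp
  ultimately have "Im w * Im w \<le> (8 * q * Im z) * Im w" by linarith
  then have "Im w \<le> 8 * q * Im z" using assms(2) by simp
  then show False using far assms(1) by linarith
qed

lemma hyp_delta_le_imp_Re_close:
  assumes "Im z > 0" "Im w > 0" "hyp_delta z w \<le> q"
  shows "\<bar>Re z - Re w\<bar> \<le> (2 + 10 * q) * Im z"
proof -
  have q: "q \<ge> 0" using hyp_delta_nonneg[OF assms(1,2)] assms(3) by linarith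
  have "(Re z - Re w)\<^sup>2 \<le> q * (2 * Im z * Im w)"
    using hyp_delta_le_iff_sq_le[OF assms(1,2), of q] assms(3) zero_le_power2[of "Im z - Im w"] by linarith
  also have "\<dots> \<le> q * (2 * Im z * ((2 + 8 * q) * Im z))"
    using hyp_delta_le_imp_Im_le[OF assms] q assms(1) by (intro mult_left_mono) auto
  also have "\<dots> \<le> ((2 + 10 * q) * Im z)\<^sup>2"
  proof -
    have "q * (2 * Im z * ((2 + 8 * q) * Im z)) = (4 * q + 16 * q * q) * (Im z * Im z)"
      by (simp add: algebra_simps)
    also have "\<dots> \<le> (4 + 40 * q + 100 * q * q) * (Im z * Im z)"
      using q by (intro mult_right_mono) auto
    also have "\<dots> = ((2 + 10 * q) * Im z)\<^sup>2" by (simp add: power2_eq_square algebra_simps)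
    finally show ?thesis .
  qed
  finally show ?thesis using q assms(1) abs_le_square_iff[of "Re z - Re w" "(2 + 10 * q) * Im z"] by simp
qed

lemma hyp_delta_le_of_comparable:
  assumes "y > 0" "K > 0"
    and "y \<le> K * Im z" "Im z \<le> K * y" "y \<le> K * Im w" "Im w \<le> K * y"
    and "\<bar>Re z - Re w\<bar> \<le> c * y"
  shows "hyp_delta z w \<le> K\<^sup>2 * (c\<^sup>2 + K\<^sup>2) / 2"
proof -
  have Im_pos: "Im z > 0" "Im w > 0"
    using assms(1-3,5) by (metis less_le_trans mult_pos_pos zero_less_mult_pos)+
  have "(Re z - Re w)\<^sup>2 \<le> (c * y)\<^sup>2"
    using assms(7) abs_le_square_iff[of "Re z - Re w" "c * y"] by simp
  moreover have "(Im z - Im w)\<^sup>2 \<le> (K * y)\<^sup>2"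
  proof -
    have "\<bar>Im z - Im w\<bar> \<le> K * y" using assms(4,6) Im_pos by (auto simp: abs_le_iff)
    then show ?thesis using power2_le_iff_abs_le[of "K * y" "Im z - Im w"] assms(1,2) by simp
  qed
  ultimately have "(Re z - Re w)\<^sup>2 + (Im z - Im w)\<^sup>2 \<le> (c\<^sup>2 + K\<^sup>2) * y\<^sup>2"
    by (simp add: power_mult_distrib algebra_simps)
  also have "\<dots> = K\<^sup>2 * (c\<^sup>2 + K\<^sup>2) / 2 * (2 * (y / K) * (y / K))"
    using assms(2) by (simp add: field_simps power2_eq_square)
  also have "\<dots> \<le> K\<^sup>2 * (c\<^sup>2 + K\<^sup>2) / 2 * (2 * Im z * Im w)"
    using assms(1-3,5) Im_pos by (intro mult_left_mono mult_mono) (auto simp: divide_le_eq mult.commute)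
  finally show ?thesis using hyp_delta_le_iff_sq_le[OF Im_pos] by blast
qed

definition half_plane_box :: "real \<Rightarrow> nat \<Rightarrow> int \<Rightarrow> complex set" where
  "half_plane_box b j s =
     {z. b ^ j \<le> Im z \<and> Im z \<le> b ^ Suc j \<and> \<bar>Re z - of_int s * b ^ j\<bar> \<le> b ^ j / 2}"

definition cone_segment :: "real \<Rightarrow> real \<Rightarrow> nat \<Rightarrow> complex set" where
  "cone_segment b \<kappa> L = {z. 1 \<le> Im z \<and> Im z \<le> b ^ Suc L \<and> \<bar>Re z\<bar> \<le> \<kappa> * Im z}"

lemma hyp_delta_le_in_half_plane_box:
  assumes "b \<ge> 1" "z \<in> half_plane_box b j s" "w \<in> half_plane_box b j s"
  shows "hyp_delta z w \<le> b\<^sup>2 * (1 + b\<^sup>2) / 2"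
proof -
  have "b ^ j \<le> b * Im v" if "v \<in> half_plane_box b j s" for v
  proof -
    have "b ^ j \<le> Im v" using that unfolding half_plane_box_def by simp
    also have "\<dots> \<le> b * Im v"
      using mult_right_mono[of 1 b "Im v"] assms(1) calculation zero_le_power[of b j] by linarith
    finally show ?thesis .
  qed
  then have "b ^ j \<le> b * Im z" "b ^ j \<le> b * Im w" using assms(2,3) by auto
  moreover have "\<bar>Re z - Re w\<bar> \<le> 1 * b ^ j"
  proof -
    have "\<bar>Re v - of_int s * b ^ j\<bar> \<le> b ^ j / 2" if "v \<in> half_plane_box b j s" for v
      using that unfolding half_plane_box_def by simp
    from this[OF assms(2)] this[OF assms(3)] show ?thesis by (simp only: abs_le_iff) linarith
  qed
  ultimately show ?thesis
    using hyp_delta_le_of_comparable[of "b ^ j" b z w 1] assms unfolding half_plane_box_def by simp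
qed

lemma exists_power_level:
  fixes b y :: real
  assumes "1 \<le> y" "y \<le> b ^ Suc L"
  shows "\<exists>j\<le>L. b ^ j \<le> y \<and> y \<le> b ^ Suc j"
  using assms(2)
proof (induction L)
  case (Suc L)
  then show ?case by (cases "b ^ Suc L \<le> y") (auto intro: le_SucI)
qed (use assms(1) in simp)

lemma cone_segment_covered_by_boxes:
  assumes "b > 0" "\<kappa> \<ge> 0" "z \<in> cone_segment b \<kappa> L"
  shows "\<exists>j\<le>L. \<exists>s\<in>{- \<lceil>\<kappa> * b\<rceil> - 1 .. \<lceil>\<kappa> * b\<rceil> + 1}. z \<in> half_plane_box b j s"
proof -
  obtain j where j: "j \<le> L" "b ^ j \<le> Im z" "Im z \<le> b ^ Suc j"
    using exists_power_level assms(3) unfolding cone_segment_def by blast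
  define u where "u = b ^ j"
  have u: "u > 0" unfolding u_def using assms(1) by simp
  define s where "s = round (Re z / u)"
  have round: "\<bar>of_int s - Re z / u\<bar> \<le> 1 / 2" unfolding s_def by (rule of_int_round_abs_le)
  have "Re z - of_int s * u = - (u * (of_int s - Re z / u))" using u by (simp add: field_simps)
  then have "\<bar>Re z - of_int s * u\<bar> = u * \<bar>of_int s - Re z / u\<bar>" using u by (simp add: abs_mult)
  also have "\<dots> \<le> u / 2" using round u by (simp add: mult_left_mono[of _ "1/2" u, simplified])
  finally have "z \<in> half_plane_box b j s" using j unfolding half_plane_box_def u_def by simp
  moreover have "\<bar>of_int s\<bar> \<le> \<kappa> * b + 1"
  proof -
    have "\<bar>Re z\<bar> \<le> \<kappa> * (b * u)"
      using assms j(3) unfolding cone_segment_def u_def by (auto intro: order_trans mult_left_mono)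
    then have "\<bar>Re z / u\<bar> \<le> \<kappa> * b" using u by (simp add: divide_le_eq ac_simps)
    then show ?thesis using round by linarith
  qed
  then have "s \<in> {- \<lceil>\<kappa> * b\<rceil> - 1 .. \<lceil>\<kappa> * b\<rceil> + 1}"
    using le_of_int_ceiling[of "\<kappa> * b"] by (simp add: abs_le_iff) linarith
  ultimately show ?thesis using j by blast
qed

section \<open>Paths and balls in graphs\<close>

lemma is_path_singleton [simp]: "is_path V E [x] \<longleftrightarrow> x \<in> V"
  unfolding is_path_def by auto

lemma is_path_Cons_Cons [simp]:
  "is_path V E (x # y # p) \<longleftrightarrow> x \<in> V \<and> E x y \<and> is_path V E (y # p)"
  unfolding is_path_def by (auto simp: less_Suc_eq_0_disj nth_Cons split: nat.splits)

lemma is_path_append_tl: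
  assumes "is_path V E p" "is_path V E q" "last p = hd q"
  shows "is_path V E (p @ tl q)"
  using assms
proof (induction p rule: induct_list012)
  case (2 x)
  then show ?case by (cases q) auto
next
  case (3 x y p)
  then show ?case by simp
qed (simp add: is_path_def)

lemma graph_dist_le_path_length:
  "is_path V E p \<Longrightarrow> graph_dist V E (hd p) (last p) \<le> enat (path_length p)"
  unfolding graph_dist_def by (rule INF_lower) auto

lemma path_of_graph_dist_le:
  assumes "graph_dist V E u v \<le> enat n"
  obtains p where "is_path V E p" "hd p = u" "last p = v" "path_length p \<le> n"
proof -
  have "graph_dist V E u v < enat (Suc n)" using assms by (simp add: le_less_trans)
  then obtain p where "is_path V E p" "hd p = u" "last p = v" "enat (path_length p) < enat (Suc n)"
    unfolding graph_dist_def INF_less_iff by auto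
  then show ?thesis using that by simp
qed

primrec reachable_within :: "('v \<Rightarrow> 'v \<Rightarrow> bool) \<Rightarrow> 'v \<Rightarrow> nat \<Rightarrow> 'v set" where
  "reachable_within E x 0 = {x}"
| "reachable_within E x (Suc n) = reachable_within E x n \<union> {y. \<exists>z \<in> reachable_within E x n. E z y}"

lemma reachable_within_mono: "m \<le> n \<Longrightarrow> reachable_within E x m \<subseteq> reachable_within E x n"
  by (induction n rule: dec_induct) auto

lemma path_nth_reachable_within:
  assumes "is_path V E p" "i < length p"
  shows "p ! i \<in> reachable_within E (hd p) i"
  using assms(2)
proof (induction i)
  case 0
  then show ?case using assms(1) by (simp add: hd_conv_nth is_path_def)
next
  case (Suc i)
  then have "E (p ! i) (p ! Suc i)" using assms(1) unfolding is_path_def by blast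
  then show ?case using Suc by auto
qed

lemma graph_dist_le_imp_reachable_within:
  assumes "graph_dist V E x y \<le> enat n"
  shows "y \<in> reachable_within E x n"
proof -
  obtain p where p: "is_path V E p" "hd p = x" "last p = y" "path_length p \<le> n"
    using path_of_graph_dist_le[OF assms] .
  then have "p \<noteq> []" "last p = p ! path_length p"
    by (auto simp: is_path_def path_length_def last_conv_nth)
  then have "y \<in> reachable_within E x (path_length p)"
    using path_nth_reachable_within[OF p(1), of "path_length p"] p(2,3)
    by (simp add: path_length_def)
  then show ?thesis using reachable_within_mono[OF p(4), of E x] by blast
qed

lemma finite_reachable_within:
  assumes "\<And>z. finite {y. E z y}"
  shows "finite (reachable_within E x n)"
  by (induction n) (simp_all add: assms Collect_bex_eq)

lemma card_reachable_within_le: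
  assumes "\<And>z. finite {y. E z y}" "\<And>z. card {y. E z y} \<le> d"
  shows "card (reachable_within E x n) \<le> (d + 1) ^ n"
proof (induction n)
  case (Suc n)
  let ?R = "reachable_within E x n"
  have "card (reachable_within E x (Suc n)) \<le> card ?R + card (\<Union>z\<in>?R. {y. E z y})"
    by (simp add: Collect_bex_eq card_Un_le)
  also have "card (\<Union>z\<in>?R. {y. E z y}) \<le> (\<Sum>z\<in>?R. card {y. E z y})"
    using finite_reachable_within[OF assms(1)] by (rule card_UN_le)
  also have "\<dots> \<le> card ?R * d" using sum_mono[OF assms(2)] by simp
  finally have "card (reachable_within E x (Suc n)) \<le> card ?R * (d + 1)" by simp
  also have "\<dots> \<le> (d + 1) ^ n * (d + 1)" using Suc by (rule mult_right_mono) simp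
  finally show ?case by (simp add: mult.commute)
qed simp

section \<open>Cayley graphs\<close>

locale cayley_graph = group G for G :: "('a, 'b) monoid_scheme" (structure) +
  fixes S :: "'a set"
  assumes generating_set: "finite_symm_gen_set G S"
begin

lemma generators_closed: "S \<subseteq> carrier G"
  and finite_generators: "finite S"
  and inv_generator: "s \<in> S \<Longrightarrow> inv s \<in> S"
  and generate_generators: "generate G S = carrier G"
  using generating_set unfolding finite_symm_gen_set_def by auto

lemma cayley_neighbours: "{y. cayley_edge G S x y} = (\<lambda>s. x \<otimes> s) ` S"
  unfolding cayley_edge_def by auto

lemma path_to_mult_generated:
  assumes "h \<in> generate G S" "x \<in> carrier G"
  shows "\<exists>p. is_path (carrier G) (cayley_edge G S) p \<and> hd p = x \<and> last p = x \<otimes> h"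
  using assms
proof (induction arbitrary: x rule: generate.induct)
  case one
  then show ?case by (intro exI[of _ "[x]"]) simp
next
  case (incl h)
  then show ?case using generators_closed
    by (intro exI[of _ "[x, x \<otimes> h]"]) (auto simp: cayley_edge_def)
next
  case (inv h)
  then show ?case using generators_closed inv_generator
    by (intro exI[of _ "[x, x \<otimes> inv h]"]) (auto simp: cayley_edge_def)
next
  case (eng h1 h2)
  have h: "h1 \<in> carrier G" "h2 \<in> carrier G"
    using eng.hyps generate_generators by auto
  obtain p1 where p1: "is_path (carrier G) (cayley_edge G S) p1" "hd p1 = x" "last p1 = x \<otimes> h1"
    using eng.IH(1)[OF eng.prems] by blast
  obtain p2 where p2: "is_path (carrier G) (cayley_edge G S) p2" "hd p2 = x \<otimes> h1"
    "last p2 = x \<otimes> h1 \<otimes> h2"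
    using eng.IH(2)[of "x \<otimes> h1"] h eng.prems by blast
  have "p1 \<noteq> []" "p2 \<noteq> []" using p1(1) p2(1) by (auto simp: is_path_def)
  then have "hd (p1 @ tl p2) = x" "last (p1 @ tl p2) = last p2"
    using p1(2,3) p2(2) by (cases p2; auto)+
  moreover have "last p2 = x \<otimes> (h1 \<otimes> h2)" using p2(3) h eng.prems by (simp add: m_assoc)
  ultimately show ?case using is_path_append_tl[OF p1(1) p2(1)] p1(3) p2(2) by auto
qed

lemma graph_dist_finite:
  assumes "x \<in> carrier G" "y \<in> carrier G"
  obtains n where "graph_dist (carrier G) (cayley_edge G S) x y = enat n"
proof -
  have "inv x \<otimes> y \<in> generate G S" using assms generate_generators by simp
  moreover have "x \<otimes> (inv x \<otimes> y) = y" using assms by (simp add: m_assoc[symmetric])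
  ultimately obtain p where "is_path (carrier G) (cayley_edge G S) p" "hd p = x" "last p = y"
    using path_to_mult_generated assms(1) by metis
  then have "graph_dist (carrier G) (cayley_edge G S) x y \<le> enat (path_length p)"
    using graph_dist_le_path_length by metis
  then show ?thesis using that enat_ile by blast
qed

lemma graph_dist_le_ceiling_word_dist:
  assumes "x \<in> carrier G" "y \<in> carrier G" "word_dist G S x y \<le> R"
  shows "graph_dist (carrier G) (cayley_edge G S) x y \<le> enat (nat \<lceil>R\<rceil>)"
proof -
  obtain n where n: "graph_dist (carrier G) (cayley_edge G S) x y = enat n"
    using graph_dist_finite[OF assms(1,2)] .
  then have "real n \<le> R" using assms(3) unfolding word_dist_def by simp
  then show ?thesis using n by simp linarith
qed

lemma word_dist_edge_le_1:
  assumes "x \<in> carrier G" "y \<in> carrier G" "cayley_edge G S x y"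
  shows "word_dist G S x y \<le> 1"
proof -
  have "graph_dist (carrier G) (cayley_edge G S) x y \<le> enat 1"
    using graph_dist_le_path_length[of "carrier G" "cayley_edge G S" "[x, y]"] assms
    by (simp add: path_length_def)
  then obtain n where "graph_dist (carrier G) (cayley_edge G S) x y = enat n" "n \<le> 1"
    by (metis enat_ile enat_ord_simps(1))
  then show ?thesis unfolding word_dist_def by simp
qed

lemma finite_reachable_within_cayley: "finite (reachable_within (cayley_edge G S) x n)"
  by (rule finite_reachable_within) (simp add: cayley_neighbours finite_generators)

lemma card_reachable_within_cayley_le:
  "card (reachable_within (cayley_edge G S) x n) \<le> (card S + 1) ^ n"
  by (rule card_reachable_within_le) (simp_all add: cayley_neighbours finite_generators card_image_le)

end

section \<open>Groups quasi-isometric to the hyperbolic plane\<close>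

lemma ex_crossing_index: "P (0::nat) \<Longrightarrow> \<not> P n \<Longrightarrow> \<exists>i<n. P i \<and> \<not> P (Suc i)"
proof (induction n)
  case (Suc n)
  then show ?case by (cases "P n") (auto intro: less_SucI)
qed simp

lemma le_power_mult_start:
  fixes y :: "nat \<Rightarrow> real"
  assumes "c \<ge> 0" "\<And>l. l < i \<Longrightarrow> y (Suc l) \<le> c * y l"
  shows "y i \<le> c ^ i * y 0"
  using assms(2)
proof (induction i)
  case (Suc i)
  then have "y (Suc i) \<le> c * (c ^ i * y 0)" using assms(1) by (meson lessI less_SucI mult_left_mono order_trans)
  then show ?case by (simp add: mult.assoc)
qed simp

lemma start_le_power_mult:
  fixes y :: "nat \<Rightarrow> real"
  assumes "c \<ge> 0" "\<And>l. l < i \<Longrightarrow> y l \<le> c * y (Suc l)"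
  shows "y 0 \<le> c ^ i * y i"
  using assms(2)
proof (induction i)
  case (Suc i)
  then have "y 0 \<le> c ^ i * (c * y (Suc i))"
    using assms(1) by (meson lessI less_SucI mult_left_mono order_trans zero_le_power)
  then show ?case by (simp add: ac_simps)
qed simp

lemma power_le_mult_power_imp_le:
  fixes b c :: real
  assumes "b ^ j \<le> c * b ^ j'" "c < b" "b \<ge> 1"
  shows "j \<le> j'"
proof (rule ccontr)
  assume "\<not> j \<le> j'"
  then have "b ^ j = b ^ (j - j' - 1) * (b * b ^ j')"
    by (simp flip: power_add power_Suc)
  also have "\<dots> \<ge> 1 * (b * b ^ j')"
    using assms(3) by (intro mult_right_mono one_le_power) auto
  finally show False
    using assms mult_strict_right_mono[of c b "b ^ j'"] zero_less_power[of b j'] by linarith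
qed

locale half_plane_qi = cayley_graph G S for G :: "('a, 'b) monoid_scheme" (structure) and S +
  fixes f :: "'a \<Rightarrow> complex" and K C :: real
  assumes maps_to_half_plane: "f ` carrier G \<subseteq> upper_half_plane"
    and K_ge_1: "K \<ge> 1" and C_nonneg: "C \<ge> 0"
    and lower_bound: "\<And>x y. x \<in> carrier G \<Longrightarrow> y \<in> carrier G \<Longrightarrow>
                        word_dist G S x y / K - C \<le> hyp_dist (f x) (f y)"
    and upper_bound: "\<And>x y. x \<in> carrier G \<Longrightarrow> y \<in> carrier G \<Longrightarrow>
                        hyp_dist (f x) (f y) \<le> K * word_dist G S x y + C"
    and coarsely_onto: "\<And>z. z \<in> upper_half_plane \<Longrightarrow> \<exists>x\<in>carrier G. hyp_dist (f x) z \<le> C"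
begin

lemma Im_f_pos: "x \<in> carrier G \<Longrightarrow> Im (f x) > 0"
  using maps_to_half_plane unfolding upper_half_plane_def by auto

text \<open>A Cayley edge, and the passage from a point of the plane to a nearby vertex, both move
  f by hyperbolic distance at most K + C.\<close>
definition near_delta :: real where
  "near_delta = cosh (K + C) - 1"

definition rho :: real where
  "rho = 2 + 10 * near_delta"

lemma near_delta_nonneg: "near_delta \<ge> 0"
  unfolding near_delta_def using cosh_real_ge_1[of "K + C"] by simp

lemma rho_ge_2: "rho \<ge> 2"
  unfolding rho_def using near_delta_nonneg by simp

lemma hyp_delta_le_near_delta:
  assumes "Im z > 0" "Im w > 0" "hyp_dist z w \<le> K + C"
  shows "hyp_delta z w \<le> near_delta"
  using hyp_dist_le_iff[OF assms(1,2), of "K + C"] assms(3) K_ge_1 C_nonneg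
  unfolding near_delta_def by simp

lemma near_imp_comparable:
  assumes "Im z > 0" "Im w > 0" "hyp_delta z w \<le> near_delta"
  shows "Im w \<le> rho * Im z" "\<bar>Re z - Re w\<bar> \<le> rho * Im z"
proof -
  have "(2 + 8 * near_delta) * Im z \<le> rho * Im z"
    using near_delta_nonneg assms(1) unfolding rho_def by (intro mult_right_mono) auto
  then show "Im w \<le> rho * Im z" using hyp_delta_le_imp_Im_le[OF assms] by linarith
  show "\<bar>Re z - Re w\<bar> \<le> rho * Im z"
    using hyp_delta_le_imp_Re_close[OF assms] unfolding rho_def .
qed

lemma hyp_delta_edge_le:
  assumes "x \<in> carrier G" "y \<in> carrier G" "cayley_edge G S x y"
  shows "hyp_delta (f x) (f y) \<le> near_delta"
proof -
  have "K * word_dist G S x y \<le> K * 1"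
    using word_dist_edge_le_1[OF assms] K_ge_1 by (intro mult_left_mono) auto
  then have "hyp_dist (f x) (f y) \<le> K + C" using upper_bound[OF assms(1,2)] by simp
  then show ?thesis using hyp_delta_le_near_delta Im_f_pos assms(1,2) by blast
qed

lemma path_step_comparable:
  assumes "is_path (carrier G) (cayley_edge G S) p" "Suc l < length p"
  shows "Im (f (p ! Suc l)) \<le> rho * Im (f (p ! l))" "Im (f (p ! l)) \<le> rho * Im (f (p ! Suc l))"
    and "\<bar>Re (f (p ! l)) - Re (f (p ! Suc l))\<bar> \<le> rho * Im (f (p ! l))"
proof -
  have x: "p ! l \<in> carrier G" "p ! Suc l \<in> carrier G" "cayley_edge G S (p ! l) (p ! Suc l)"
    using assms nth_mem[of l p] nth_mem[of "Suc l" p] unfolding is_path_def by auto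
  then have "hyp_delta (f (p ! l)) (f (p ! Suc l)) \<le> near_delta" by (rule hyp_delta_edge_le)
  moreover from this have "hyp_delta (f (p ! Suc l)) (f (p ! l)) \<le> near_delta"
    by (simp add: hyp_delta_commute[of "f (p ! l)"])
  ultimately show "Im (f (p ! Suc l)) \<le> rho * Im (f (p ! l))" "Im (f (p ! l)) \<le> rho * Im (f (p ! Suc l))"
      "\<bar>Re (f (p ! l)) - Re (f (p ! Suc l))\<bar> \<le> rho * Im (f (p ! l))"
    using near_imp_comparable Im_f_pos x(1,2) by blast+
qed

definition coarse_radius :: "real \<Rightarrow> nat" where
  "coarse_radius d = nat \<lceil>K * (arcosh (1 + d) + C)\<rceil>"

lemma graph_dist_le_coarse_radius:
  assumes "x \<in> carrier G" "y \<in> carrier G" "hyp_delta (f x) (f y) \<le> d"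
  shows "graph_dist (carrier G) (cayley_edge G S) x y \<le> enat (coarse_radius d)"
proof -
  have "hyp_dist (f x) (f y) \<le> arcosh (1 + d)"
    using hyp_dist_le_arcosh Im_f_pos assms by blast
  then have "word_dist G S x y / K \<le> arcosh (1 + d) + C" using lower_bound[OF assms(1,2)] by simp
  then have "word_dist G S x y \<le> K * (arcosh (1 + d) + C)"
    using K_ge_1 by (simp add: divide_le_eq mult.commute)
  then show ?thesis
    unfolding coarse_radius_def by (rule graph_dist_le_ceiling_word_dist[OF assms(1,2)])
qed

lemma preimage_subset_reachable_within:
  assumes "\<And>z w. z \<in> A \<Longrightarrow> w \<in> A \<Longrightarrow> hyp_delta z w \<le> d" "x \<in> carrier G" "f x \<in> A"
  shows "{y \<in> carrier G. f y \<in> A} \<subseteq> reachable_within (cayley_edge G S) x (coarse_radius d)"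
proof
  fix y assume "y \<in> {y \<in> carrier G. f y \<in> A}"
  then have "graph_dist (carrier G) (cayley_edge G S) x y \<le> enat (coarse_radius d)"
    using graph_dist_le_coarse_radius assms by blast
  then show "y \<in> reachable_within (cayley_edge G S) x (coarse_radius d)"
    by (rule graph_dist_le_imp_reachable_within)
qed

lemma finite_card_preimage_le:
  assumes "\<And>z w. z \<in> A \<Longrightarrow> w \<in> A \<Longrightarrow> hyp_delta z w \<le> d"
  shows "finite {y \<in> carrier G. f y \<in> A}"
    and "card {y \<in> carrier G. f y \<in> A} \<le> (card S + 1) ^ coarse_radius d"
proof -
  let ?P = "{y \<in> carrier G. f y \<in> A}"
  have "finite ?P \<and> card ?P \<le> (card S + 1) ^ coarse_radius d"
  proof (cases "?P = {}")
    case True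
    then show ?thesis by (metis card.empty finite.emptyI zero_le)
  next
    case False
    then obtain x where "x \<in> carrier G" "f x \<in> A" by blast
    from preimage_subset_reachable_within[OF assms this] show ?thesis
      using finite_reachable_within_cayley card_reachable_within_cayley_le
      by (meson card_mono finite_subset order_trans)
  qed
  then show "finite ?P" "card ?P \<le> (card S + 1) ^ coarse_radius d" by auto
qed

definition base :: real where
  "base = rho\<^sup>2 + 1"

definition columns :: nat where
  "columns = nat (2 * \<lceil>rho * base\<rceil> + 3)"

definition box_card :: nat where
  "box_card = (card S + 1) ^ coarse_radius (base\<^sup>2 * (1 + base\<^sup>2) / 2)"

definition wall :: "nat \<Rightarrow> 'a set" where
  "wall h = {x \<in> carrier G. f x \<in> cone_segment base rho h}"

lemma base_gt_rho_sq: "base > rho\<^sup>2"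
  unfolding base_def by simp

lemma base_gt_1: "base > 1"
  unfolding base_def using rho_ge_2 by simp

lemma wall_subset_boxes:
  "wall h \<subseteq> (\<Union>(j, s) \<in> {..h} \<times> {- \<lceil>rho * base\<rceil> - 1 .. \<lceil>rho * base\<rceil> + 1}.
                 {x \<in> carrier G. f x \<in> half_plane_box base j s})"
  using cone_segment_covered_by_boxes[of base rho] base_gt_1 rho_ge_2 unfolding wall_def by fastforce

lemma finite_card_wall:
  shows "finite (wall h)" and "card (wall h) \<le> (h + 1) * columns * box_card"
proof -
  let ?I = "{..h} \<times> {- \<lceil>rho * base\<rceil> - 1 .. \<lceil>rho * base\<rceil> + 1}"
  let ?B = "\<lambda>(j, s). {x \<in> carrier G. f x \<in> half_plane_box base j s}"
  have box: "finite (?B js) \<and> card (?B js) \<le> box_card" for js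
  proof (cases js)
    case (Pair j s)
    have "hyp_delta z w \<le> base\<^sup>2 * (1 + base\<^sup>2) / 2"
      if "z \<in> half_plane_box base j s" "w \<in> half_plane_box base j s" for z w
      using hyp_delta_le_in_half_plane_box base_gt_1 that by simp
    from finite_card_preimage_le[OF this] show ?thesis unfolding Pair box_card_def by simp
  qed
  have "card ?I = (h + 1) * columns"
    unfolding columns_def by (simp add: card_cartesian_product ac_simps)
  have "card (\<Union>(?B ` ?I)) \<le> (\<Sum>js\<in>?I. card (?B js))" by (rule card_UN_le) simp
  also have "\<dots> \<le> card ?I * box_card" using sum_mono[of ?I "\<lambda>js. card (?B js)" "\<lambda>_. box_card"] box by simp
  finally have "card (\<Union>(?B ` ?I)) \<le> (h + 1) * columns * box_card"
    using \<open>card ?I = (h + 1) * columns\<close> by simp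
  moreover have "finite (\<Union>(?B ` ?I))" using box by simp
  ultimately show "finite (wall h)" "card (wall h) \<le> (h + 1) * columns * box_card"
    using wall_subset_boxes[of h] card_mono[of "\<Union>(?B ` ?I)" "wall h"]
    by (auto intro: finite_subset)
qed

definition anchor :: "complex \<Rightarrow> 'a" where
  "anchor z = (SOME x. x \<in> carrier G \<and> hyp_dist (f x) z \<le> C)"

lemma
  assumes "Im z > 0"
  shows anchor_in_carrier: "anchor z \<in> carrier G"
    and hyp_delta_anchor_le: "hyp_delta (f (anchor z)) z \<le> near_delta"
proof -
  have "\<exists>x. x \<in> carrier G \<and> hyp_dist (f x) z \<le> C"
    using coarsely_onto[of z] assms unfolding upper_half_plane_def by auto
  then have x: "anchor z \<in> carrier G \<and> hyp_dist (f (anchor z)) z \<le> C"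
    unfolding anchor_def by (rule someI_ex)
  then show "anchor z \<in> carrier G" by simp
  show "hyp_delta (f (anchor z)) z \<le> near_delta"
    using hyp_delta_le_near_delta[OF Im_f_pos assms] x K_ge_1 by simp
qed

definition spacing :: real where
  "spacing = 2 * rho + 1"

definition sample_point :: "nat \<Rightarrow> int \<Rightarrow> complex" where
  "sample_point j t = Complex (spacing * of_int t * base ^ j) (base ^ j)"

definition sample_vertex :: "nat \<times> int \<Rightarrow> 'a" where
  "sample_vertex = (\<lambda>(j, t). anchor (sample_point j t))"

lemma sample_vertex_in_carrier: "sample_vertex jt \<in> carrier G"
  using anchor_in_carrier base_gt_1 unfolding sample_vertex_def sample_point_def by (simp split: prod.split)

lemma sample_vertex_near:
  fixes j :: nat and t :: int
  defines "w \<equiv> f (sample_vertex (j, t))"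
  shows "Im w > 0" "Im w \<le> rho * base ^ j" "base ^ j \<le> rho * Im w"
    and "\<bar>Re w - spacing * of_int t * base ^ j\<bar> \<le> rho * base ^ j"
proof -
  have pt: "Im (sample_point j t) = base ^ j" "Re (sample_point j t) = spacing * of_int t * base ^ j"
    unfolding sample_point_def by simp_all
  then have "Im (sample_point j t) > 0" using base_gt_1 by simp
  note anchor = anchor_in_carrier[OF this] hyp_delta_anchor_le[OF this]
  show w: "Im w > 0" unfolding w_def sample_vertex_def using Im_f_pos anchor(1) by simp
  have d1: "hyp_delta w (sample_point j t) \<le> near_delta"
    using anchor(2) unfolding w_def sample_vertex_def by simp
  then have d2: "hyp_delta (sample_point j t) w \<le> near_delta"
    by (simp add: hyp_delta_commute[of w])
  note near = near_imp_comparable[OF w _ d1] near_imp_comparable[OF _ w d2]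
  show "base ^ j \<le> rho * Im w" "Im w \<le> rho * base ^ j"
      "\<bar>Re w - spacing * of_int t * base ^ j\<bar> \<le> rho * base ^ j"
    using near pt base_gt_1 by (simp_all add: abs_minus_commute)
qed

lemma inj_sample_vertex: "inj sample_vertex"
proof (rule injI)
  fix jt jt' assume eq: "sample_vertex jt = sample_vertex jt'"
  obtain j t j' t' where jt: "jt = (j, t)" "jt' = (j', t')" by (cases jt, cases jt')
  let ?w = "f (sample_vertex (j, t))"
  note near = sample_vertex_near[of j t] sample_vertex_near[of j' t', folded eq[unfolded jt]]
  have "base ^ i \<le> rho\<^sup>2 * base ^ i'"
    if "base ^ i \<le> rho * Im ?w" "Im ?w \<le> rho * base ^ i'" for i i'
  proof -
    have "rho * Im ?w \<le> rho * (rho * base ^ i')" using that(2) rho_ge_2 by (intro mult_left_mono) auto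
    then show ?thesis using that(1) by (simp add: power2_eq_square mult.assoc)
  qed
  then have "j \<le> j'" "j' \<le> j"
    using near power_le_mult_power_imp_le[OF _ base_gt_rho_sq] base_gt_1 by (meson less_imp_le)+
  then have j: "j' = j" by simp
  let ?u = "spacing * base ^ j"
  have u: "?u > 0" unfolding spacing_def using rho_ge_2 base_gt_1 by simp
  have "\<bar>of_int t - of_int t'\<bar> * ?u = \<bar>of_int t * ?u - of_int t' * ?u\<bar>"
    using abs_mult_pos[of ?u "of_int t - of_int t'"] u by (simp add: left_diff_distrib)
  also have "\<dots> \<le> 2 * rho * base ^ j"
    using near(4) near(8) unfolding j by (simp only: abs_le_iff ac_simps) linarith
  also have "\<dots> < ?u" unfolding spacing_def using base_gt_1 by simp
  finally have "\<bar>of_int t - of_int t'\<bar> * ?u < 1 * ?u" by simp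
  then have "\<bar>of_int t - of_int t' :: real\<bar> < 1" using u by (simp only: mult_less_cancel_right_pos)
  then show "jt = jt'" using jt j by simp
qed

lemma sample_vertex_beyond_cone:
  assumes "spacing * of_int t > rho * (rho + 1)"
  shows "rho * Im (f (sample_vertex (j, t))) < Re (f (sample_vertex (j, t)))"
    and "Re (f (sample_vertex (j, - t))) < - (rho * Im (f (sample_vertex (j, - t))))"
proof -
  let ?u = "base ^ j"
  have "rho * (rho + 1) * ?u < spacing * of_int t * ?u"
    using assms base_gt_1 by (intro mult_strict_right_mono) auto
  moreover have "rho * (rho + 1) * ?u = rho * (rho * ?u) + rho * ?u" by (simp add: algebra_simps)
  moreover have Im_bound: "rho * Im (f (sample_vertex (j, t'))) \<le> rho * (rho * ?u)" for t'
    using sample_vertex_near(2) rho_ge_2 by (intro mult_left_mono) auto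
  note Im_bound[of t] Im_bound[of "- t"]
  moreover have "spacing * of_int (- t) * ?u = - (spacing * of_int t * ?u)" by simp
  ultimately show "rho * Im (f (sample_vertex (j, t))) < Re (f (sample_vertex (j, t)))"
    and "Re (f (sample_vertex (j, - t))) < - (rho * Im (f (sample_vertex (j, - t))))"
    using sample_vertex_near(4)[of j t] sample_vertex_near(4)[of j "- t"]
    by (simp_all only: abs_le_iff) linarith+
qed

lemma sample_vertex_notin_wall:
  assumes "spacing * of_int t > rho * (rho + 1)"
  shows "sample_vertex (j, t) \<notin> wall h" "sample_vertex (j, - t) \<notin> wall h"
  using sample_vertex_beyond_cone[OF assms, of j]
  unfolding wall_def cone_segment_def by (simp_all add: abs_le_iff)

lemma hyp_delta_sample_vertex_mirror_le:
  assumes "0 < t" "of_int t \<le> T"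
  shows "hyp_delta (f (sample_vertex (j, t))) (f (sample_vertex (j, - t)))
           \<le> rho\<^sup>2 * ((2 * rho + 2 * spacing * T)\<^sup>2 + rho\<^sup>2) / 2"
proof (rule hyp_delta_le_of_comparable)
  let ?u = "base ^ j"
  show "?u > 0" "rho > 0" using base_gt_1 rho_ge_2 by simp_all
  show "?u \<le> rho * Im (f (sample_vertex (j, t)))" "Im (f (sample_vertex (j, t))) \<le> rho * ?u"
    "?u \<le> rho * Im (f (sample_vertex (j, - t)))" "Im (f (sample_vertex (j, - t))) \<le> rho * ?u"
    using sample_vertex_near by blast+
  have "spacing * of_int t * ?u \<le> spacing * T * ?u" "0 \<le> spacing * of_int t * ?u"
    using assms base_gt_1 rho_ge_2 unfolding spacing_def by (auto intro!: mult_right_mono mult_left_mono)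
  moreover have "spacing * of_int (- t) * ?u = - (spacing * of_int t * ?u)" by simp
  ultimately have "\<bar>Re (f (sample_vertex (j, t))) - Re (f (sample_vertex (j, - t)))\<bar>
                     \<le> 2 * (rho * ?u) + 2 * (spacing * T * ?u)"
    using sample_vertex_near(4)[of j t] sample_vertex_near(4)[of j "- t"]
    by (simp only: abs_le_iff) linarith
  then show "\<bar>Re (f (sample_vertex (j, t))) - Re (f (sample_vertex (j, - t)))\<bar>
               \<le> (2 * rho + 2 * spacing * T) * ?u"
    by (simp add: algebra_simps)
qed

lemma path_crosses_axis:
  assumes path: "is_path (carrier G) (cayley_edge G S) p"
    and "Re (f (hd p)) > 0" "Re (f (last p)) \<le> 0"
  obtains i where "i < path_length p" "\<bar>Re (f (p ! i))\<bar> \<le> rho * Im (f (p ! i))"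
    "Im (f (p ! i)) \<le> rho ^ i * Im (f (hd p))" "Im (f (hd p)) \<le> rho ^ i * Im (f (p ! i))"
proof -
  define z where "z i = f (p ! i)" for i
  have "p \<noteq> []" using path unfolding is_path_def by simp
  then have len: "length p = Suc (path_length p)" and "z 0 = f (hd p)" "z (path_length p) = f (last p)"
    unfolding z_def path_length_def by (auto simp: hd_conv_nth last_conv_nth)
  then have "\<exists>i < path_length p. Re (z i) > 0 \<and> \<not> Re (z (Suc i)) > 0"
    using assms(2,3) by (intro ex_crossing_index) auto
  then obtain i where i: "i < path_length p" "Re (z i) > 0" "\<not> Re (z (Suc i)) > 0" by blast
  note step = path_step_comparable[OF path, unfolded len Suc_less_eq, folded z_def]
  have "\<bar>Re (z i)\<bar> \<le> rho * Im (z i)" using step(3)[OF i(1)] i(2,3) by (simp add: abs_le_iff)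
  moreover have "Im (z i) \<le> rho ^ i * Im (z 0)" "Im (z 0) \<le> rho ^ i * Im (z i)"
    using le_power_mult_start[of rho i "\<lambda>l. Im (z l)"] start_le_power_mult[of rho i "\<lambda>l. Im (z l)"]
      step(1,2) i(1) rho_ge_2 by auto
  ultimately show ?thesis using that i(1) \<open>z 0 = f (hd p)\<close> unfolding z_def by auto
qed

lemma wall_crossing:
  assumes path: "is_path (carrier G) (cayley_edge G S) p" and avoids: "set p \<inter> wall h = {}"
    and "Re (f (hd p)) > 0" "Re (f (last p)) \<le> 0"
  shows "Im (f (hd p)) < rho ^ path_length p
         \<or> base ^ Suc h < rho ^ path_length p * Im (f (hd p))"
proof -
  let ?n = "path_length p" and ?y = "Im (f (hd p))"
  obtain i where i: "i < ?n" "\<bar>Re (f (p ! i))\<bar> \<le> rho * Im (f (p ! i))"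
    and chain: "Im (f (p ! i)) \<le> rho ^ i * ?y" "?y \<le> rho ^ i * Im (f (p ! i))"
    using path_crosses_axis[OF assms(1,3,4)] .
  have "p ! i \<in> set p" "hd p \<in> set p" using i(1) path unfolding path_length_def is_path_def by auto
  then have "p ! i \<notin> wall h" "p ! i \<in> carrier G" "hd p \<in> carrier G"
    using path avoids unfolding is_path_def by auto
  then have outside: "Im (f (p ! i)) < 1 \<or> base ^ Suc h < Im (f (p ! i))"
    using i(2) unfolding wall_def cone_segment_def by auto
  have "rho ^ i \<le> rho ^ ?n" using i(1) rho_ge_2 by (intro power_increasing) auto
  from outside show ?thesis
  proof
    assume "Im (f (p ! i)) < 1"
    then have "rho ^ i * Im (f (p ! i)) < rho ^ i" using rho_ge_2 by simp
    then show ?thesis using chain(2) \<open>rho ^ i \<le> rho ^ ?n\<close> by linarith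
  next
    assume "base ^ Suc h < Im (f (p ! i))"
    moreover have "rho ^ i * ?y \<le> rho ^ ?n * ?y"
      using \<open>rho ^ i \<le> rho ^ ?n\<close> Im_f_pos[OF \<open>hd p \<in> carrier G\<close>] by (intro mult_right_mono) auto
    ultimately show ?thesis using chain(1) by linarith
  qed
qed

lemma Re_sample_vertex_sign:
  assumes "spacing * of_int t > rho * (rho + 1)"
  shows "Re (f (sample_vertex (j, t))) > 0" "Re (f (sample_vertex (j, - t))) < 0"
proof -
  have "0 < rho * Im (f (sample_vertex (j, t')))" for t'
    using sample_vertex_near(1) rho_ge_2 by simp
  from this[of t] this[of "- t"] show "Re (f (sample_vertex (j, t))) > 0" "Re (f (sample_vertex (j, - t))) < 0"
    using sample_vertex_beyond_cone[OF assms, of j] by linarith+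
qed

lemma sample_vertex_level_bounds:
  assumes "e \<le> j" "j \<le> 3 * e"
  shows "base ^ e \<le> rho * Im (f (sample_vertex (j, t)))"
    and "Im (f (sample_vertex (j, t))) \<le> rho * base ^ (3 * e)"
proof -
  have "base ^ e \<le> base ^ j" "base ^ j \<le> base ^ (3 * e)"
    using base_gt_1 assms by (auto intro: power_increasing)
  moreover have "rho * base ^ j \<le> rho * base ^ (3 * e)"
    using calculation(2) rho_ge_2 by (intro mult_left_mono) auto
  ultimately show "base ^ e \<le> rho * Im (f (sample_vertex (j, t)))"
    and "Im (f (sample_vertex (j, t))) \<le> rho * base ^ (3 * e)"
    using sample_vertex_near(2,3)[of j t] by auto
qed

lemma paths_across_wall_long:
  assumes "rho ^ Suc r \<le> base ^ e" "e \<le> j" "j \<le> 3 * e"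
    and "spacing * of_int t > rho * (rho + 1)" "spacing * of_int t' > rho * (rho + 1)"
    and path: "is_path (carrier G) (cayley_edge G S) p"
    and ends: "hd p = sample_vertex (j, t)" "last p = sample_vertex (j', - t')"
    and avoids: "set p \<inter> wall (4 * e + 1) = {}"
  shows "r < path_length p"
proof -
  let ?n = "path_length p" and ?y = "Im (f (hd p))"
  have "?y < rho ^ ?n \<or> base ^ Suc (4 * e + 1) < rho ^ ?n * ?y"
    using wall_crossing[OF path avoids] Re_sample_vertex_sign[OF assms(4), of j]
      Re_sample_vertex_sign[OF assms(5), of j'] ends by simp
  moreover have "Suc (4 * e + 1) = (e + 2) + 3 * e" by simp
  ultimately have cross: "?y < rho ^ ?n \<or> base ^ (e + 2) * base ^ (3 * e) < rho ^ ?n * ?y"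
    by (simp only: power_add)
  note level = sample_vertex_level_bounds[OF assms(2,3), of t, folded ends(1)]
  have "base ^ e < rho ^ Suc ?n"
  proof (cases "?y < rho ^ ?n")
    case True
    then have "rho * ?y < rho * rho ^ ?n" using rho_ge_2 by simp
    then show ?thesis using level(1) by simp
  next
    case False
    moreover have "rho ^ ?n * ?y \<le> rho ^ ?n * (rho * base ^ (3 * e))"
      using level(2) rho_ge_2 by (intro mult_left_mono) auto
    ultimately have "base ^ (e + 2) * base ^ (3 * e) < rho ^ Suc ?n * base ^ (3 * e)"
      using cross by (simp add: ac_simps)
    then have "base ^ (e + 2) < rho ^ Suc ?n" using base_gt_1 by simp
    moreover have "base ^ e \<le> base ^ (e + 2)" using base_gt_1 by (intro power_increasing) auto
    ultimately show ?thesis by linarith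
  qed
  then have "rho ^ Suc r < rho ^ Suc ?n" using assms(1) by linarith
  then show ?thesis using power_less_imp_less_exp[of rho] rho_ge_2 by force
qed

definition first_column :: nat where
  "first_column = nat \<lceil>rho * (rho + 1) / spacing\<rceil> + 1"

definition jump_radius :: "nat \<Rightarrow> nat" where
  "jump_radius T =
     coarse_radius (rho\<^sup>2 * ((2 * rho + 2 * spacing * real (first_column + T))\<^sup>2 + rho\<^sup>2) / 2)"

definition sample_block :: "nat \<Rightarrow> nat \<Rightarrow> (nat \<times> int) set" where
  "sample_block e T = {e .. 3 * e} \<times> {int first_column ..< int (first_column + T)}"

lemma first_column_ge_1: "first_column \<ge> 1"
  unfolding first_column_def by simp

lemma spacing_pos: "spacing > 0"
  unfolding spacing_def using rho_ge_2 by simp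

lemma beyond_first_column:
  assumes "int first_column \<le> t"
  shows "spacing * of_int t > rho * (rho + 1)"
proof -
  have "rho * (rho + 1) / spacing < real first_column"
    unfolding first_column_def by linarith
  also have "\<dots> \<le> of_int t" using assms by linarith
  finally show ?thesis using spacing_pos by (simp add: divide_less_eq mult.commute)
qed

lemma graph_dist_mirror_le:
  assumes "(j, t) \<in> sample_block e T"
  shows "graph_dist (carrier G) (cayley_edge G S) (sample_vertex (j, t)) (sample_vertex (j, - t))
           \<le> enat (jump_radius T)"
proof -
  have t: "int first_column \<le> t" "t < int (first_column + T)"
    using assms unfolding sample_block_def by auto
  then have "0 < t" using first_column_ge_1 by linarith
  moreover have "of_int t \<le> real (first_column + T)"
    using t(2) by (metis less_imp_le of_int_le_iff of_int_of_nat_eq)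
  ultimately have "hyp_delta (f (sample_vertex (j, t))) (f (sample_vertex (j, - t)))
      \<le> rho\<^sup>2 * ((2 * rho + 2 * spacing * real (first_column + T))\<^sup>2 + rho\<^sup>2) / 2"
    by (rule hyp_delta_sample_vertex_mirror_le)
  then show ?thesis
    unfolding jump_radius_def by (intro graph_dist_le_coarse_radius sample_vertex_in_carrier)
qed

lemma sample_block_memD:
  assumes "(j, t) \<in> sample_block e T"
  shows "e \<le> j" "j \<le> 3 * e" "spacing * of_int t > rho * (rho + 1)"
  using assms beyond_first_column unfolding sample_block_def by auto

lemma card_sample_block: "card (sample_block e T) = (2 * e + 1) * T"
  unfolding sample_block_def by (simp add: card_cartesian_product)

lemma card_wall_le_sample_block:
  "m * card (wall (4 * e + 1)) \<le> (2 * e + 1) * (2 * m * columns * box_card)"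
proof -
  have "m * card (wall (4 * e + 1)) \<le> m * ((4 * e + 2) * columns * box_card)"
    using finite_card_wall(2)[of "4 * e + 1"] by simp
  also have "\<dots> = (2 * e + 1) * (2 * m * columns * box_card)" by (simp add: algebra_simps)
  finally show ?thesis .
qed

lemma sample_block_mirror_disjoint:
  "sample_vertex ` sample_block e T \<inter> sample_vertex ` apsnd uminus ` sample_block e T = {}"
proof -
  have "sample_block e T \<inter> apsnd uminus ` sample_block e T = {}"
    using first_column_ge_1 unfolding sample_block_def by auto
  then show ?thesis using inj_sample_vertex by (simp add: image_Int[symmetric])
qed

lemma bij_betw_sample_mirror:
  "bij_betw (sample_vertex \<circ> apsnd uminus \<circ> inv_into I sample_vertex)
     (sample_vertex ` I) (sample_vertex ` apsnd uminus ` I)"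
proof -
  have inj: "inj_on sample_vertex X" for X using inj_sample_vertex by (rule inj_on_subset) simp
  have "bij_betw (inv_into I sample_vertex) (sample_vertex ` I) I"
    by (rule bij_betw_inv_into) (simp add: bij_betw_imageI[OF inj])
  moreover have "apsnd uminus (apsnd uminus jt) = jt" for jt :: "nat \<times> int" by (cases jt) simp
  then have "bij_betw (apsnd uminus) I (apsnd uminus ` I)"
    by (metis inj_on_imp_bij_betw inj_on_inverseI)
  moreover have "bij_betw sample_vertex (apsnd uminus ` I) (sample_vertex ` apsnd uminus ` I)"
    by (rule inj_on_imp_bij_betw[OF inj])
  ultimately show ?thesis by (metis bij_betw_trans)
qed

lemma separating_triple:
  fixes m r :: nat
  defines "T \<equiv> 2 * m * columns * box_card + 1"
  shows "\<exists>U F Ou \<mu>. U \<subseteq> carrier G \<and> F \<subseteq> carrier G \<and> Ou \<subseteq> carrier G \<and>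
           finite U \<and> finite F \<and> finite Ou \<and> U \<inter> F = {} \<and> U \<inter> Ou = {} \<and> F \<inter> Ou = {} \<and>
           U \<noteq> {} \<and> card U \<ge> m * card F \<and> bij_betw \<mu> U Ou \<and>
           (\<forall>u\<in>U. graph_dist (carrier G) (cayley_edge G S) u (\<mu> u) \<le> enat (jump_radius T)) \<and>
           (\<forall>p. is_path (carrier G) (cayley_edge G S) p \<and> hd p \<in> U \<and> last p \<in> Ou \<longrightarrow>
                set p \<inter> F \<noteq> {} \<or> path_length p \<ge> r)"
proof -
  obtain e where e: "rho ^ Suc r < base ^ e" using real_arch_pow base_gt_1 by blast
  define I where "I = sample_block e T"
  define U where "U = sample_vertex ` I"
  define Ou where "Ou = sample_vertex ` apsnd uminus ` I"
  define F where "F = wall (4 * e + 1)"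
  define \<mu> where "\<mu> = sample_vertex \<circ> apsnd uminus \<circ> inv_into I sample_vertex"
  have "card U = (2 * e + 1) * T"
    using card_image[OF inj_on_subset[OF inj_sample_vertex]] card_sample_block
    unfolding U_def I_def by simp
  then have card: "U \<noteq> {}" "m * card F \<le> card U"
    using card_wall_le_sample_block[of m e] unfolding T_def F_def by auto
  have "sample_vertex (j, t) \<notin> F" "sample_vertex (j, - t) \<notin> F" if "(j, t) \<in> I" for j t
    using sample_vertex_notin_wall[OF sample_block_memD(3)] that unfolding I_def F_def by blast+
  then have outside_wall: "U \<inter> F = {}" "F \<inter> Ou = {}" unfolding U_def Ou_def by force+
  have jump: "graph_dist (carrier G) (cayley_edge G S) u (\<mu> u) \<le> enat (jump_radius T)"
    if u: "u \<in> U" for u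
  proof -
    obtain jt where "jt \<in> I" "u = sample_vertex jt" using u unfolding U_def by blast
    moreover obtain j t where "jt = (j, t)" by (cases jt)
    ultimately have jt: "(j, t) \<in> I" "u = sample_vertex (j, t)" by simp_all
    then have "\<mu> u = sample_vertex (j, - t)"
      unfolding \<mu>_def using inv_into_f_f[OF inj_on_subset[OF inj_sample_vertex]] by simp
    then show ?thesis using graph_dist_mirror_le jt unfolding I_def by simp
  qed
  have long: "r < path_length p"
    if path: "is_path (carrier G) (cayley_edge G S) p" "hd p \<in> U" "last p \<in> Ou" "set p \<inter> F = {}"
    for p
  proof -
    obtain j t where jt: "(j, t) \<in> I" "hd p = sample_vertex (j, t)"
      using path(2) unfolding U_def by auto
    obtain j' t' where jt': "(j', t') \<in> I" "last p = sample_vertex (j', - t')"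
      using path(3) unfolding Ou_def by auto
    note block = sample_block_memD[OF jt(1)[unfolded I_def]] sample_block_memD[OF jt'(1)[unfolded I_def]]
    show ?thesis
      by (rule paths_across_wall_long[OF less_imp_le[OF e] block(1,2,3,6) path(1) jt(2) jt'(2)
            path(4)[unfolded F_def]])
  qed
  show ?thesis
  proof (rule exI[of _ U], rule exI[of _ F], rule exI[of _ Ou], rule exI[of _ \<mu>], intro conjI)
    show "U \<subseteq> carrier G" "F \<subseteq> carrier G" "Ou \<subseteq> carrier G"
      unfolding U_def Ou_def F_def wall_def using sample_vertex_in_carrier by auto
    show "finite U" "finite F" "finite Ou"
      unfolding U_def Ou_def F_def I_def sample_block_def by (simp_all add: finite_card_wall(1))
    show "U \<inter> F = {}" by (fact outside_wall(1))
    show "U \<inter> Ou = {}" unfolding U_def Ou_def I_def by (rule sample_block_mirror_disjoint)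
    show "F \<inter> Ou = {}" by (fact outside_wall(2))
    show "U \<noteq> {}" "m * card F \<le> card U" by (fact card)+
    show "bij_betw \<mu> U Ou" unfolding \<mu>_def U_def Ou_def by (rule bij_betw_sample_mirror)
    show "\<forall>u\<in>U. graph_dist (carrier G) (cayley_edge G S) u (\<mu> u) \<le> enat (jump_radius T)"
      using jump by blast
    show "\<forall>p. is_path (carrier G) (cayley_edge G S) p \<and> hd p \<in> U \<and> last p \<in> Ou \<longrightarrow>
            set p \<inter> F \<noteq> {} \<or> r \<le> path_length p"
      using long by (meson less_imp_le)
  qed
qed

lemma extraterrestrial: "extraterrestrial_graph (carrier G) (cayley_edge G S)"
  unfolding extraterrestrial_graph_def by (rule allI, rule exI, rule allI, rule separating_triple)

end

theorem mainTheorem16: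
  fixes G :: "('a, 'b) monoid_scheme"
  assumes "finitely_generated_group G"
    and "\<exists>S. finite_symm_gen_set G S \<and>
           quasi_isometric (carrier G) (word_dist G S) upper_half_plane hyp_dist"
  shows "extraterrestrial_group G"
proof -
  obtain S where S: "finite_symm_gen_set G S"
    and "quasi_isometric (carrier G) (word_dist G S) upper_half_plane hyp_dist"
    using assms(2) by blast
  then obtain f K C where "f ` carrier G \<subseteq> upper_half_plane" "K \<ge> 1" "C \<ge> 0"
    and "\<forall>x\<in>carrier G. \<forall>y\<in>carrier G. word_dist G S x y / K - C \<le> hyp_dist (f x) (f y) \<and>
                                    hyp_dist (f x) (f y) \<le> K * word_dist G S x y + C"
    and "\<forall>z\<in>upper_half_plane. \<exists>x\<in>carrier G. hyp_dist (f x) z \<le> C"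
    unfolding quasi_isometric_def by blast
  with assms(1) S have "half_plane_qi G S f K C"
    unfolding finitely_generated_group_def half_plane_qi_def half_plane_qi_axioms_def
      cayley_graph_def cayley_graph_axioms_def by auto
  then have "extraterrestrial_graph (carrier G) (cayley_edge G S)"
    by (rule half_plane_qi.extraterrestrial)
  then show ?thesis unfolding extraterrestrial_group_def using S by blast
qed

end
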